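(* Let $\mathbb S$ be the free semigroup action on the compact metric space $(X,d)$ generated by continuous maps $g_1,\dots,g_p$. For every $x\in X$, $$\sup_{\omega\in\Sigma_p^+}h_{D\times d}((\omega,x))\le h_d(x)+\log p.$$
   Context: Setting: $G_n^*$ the set of words $\underline g=g_{i_n}\cdots g_{i_1}$, $i_j\in\{1,\dots,p\}$; $d_{\underline g}(x,y)=\max_{0\le j\le n}d(g_{i_j}\cdots g_{i_1}x,g_{i_j}\cdots g_{i_1}y)$; $b_d(K,\underline g,\varepsilon)$ is the minimal cardinality of a $(\underline g,\varepsilon)$-spanning subset $F$ of $K$ (every $x\in K$ has $y\in F$ with $d_{\underline g}(x,y)<\varepsilon$). $B_d(K,\mathbb S,\varepsilon)=\limsup_n\frac1n\log\big(p^{-n}\sum_{\underline g\in G_n^*}b_d(K,\underline g,\varepsilon)\big)$, $h_d(x,\varepsilon)=\inf\{B_d(K,\mathbb S,\varepsilon):K\text{ compact neighbourhood of }x\}$, $h_d(x)=\lim_{\varepsilon\to0^+}h_d(x,\varepsilon)$. Skew product: $\Sigma_p^+=\{1,\dots,p\}^{\mathbb N}$ with metric $D(\omega,\omega')=p^{-\min\{n:\omega_n\ne\omega'_n\}}$, $\mathcal F_G(\omega,x)=(\sigma\omega,g_{\omega_1}(x))$, metric $D\times d=\max(D,d)$ on $\Sigma_p^+\times X$. For $V\subset\Sigma_p^+\times X$ let $B_{D\times d}(V,\mathcal F_G,\varepsilon)=\limsup_n\frac1n\log b_n(V,\varepsilon)$, where $b_n(V,\varepsilon)$ is the minimal cardinality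 of an $(n,\varepsilon)$-spanning set of $V$ for the Bowen metric of $\mathcal F_G$; $h_{D\times d}(z,\varepsilon)=\inf\{B_{D\times d}(V,\mathcal F_G,\varepsilon):V\text{ compact neighbourhood of }z\}$ and $h_{D\times d}(z)=\lim_{\varepsilon\to0^+}h_{D\times d}(z,\varepsilon)$ (the entropy function of $\mathcal F_G$). *)

theory Defs
  imports "HOL-Analysis.Analysis"
begin

text \<open>A word g_{i_n} ... g_{i_1} is represented by the list [i_1, ..., i_n] of indices in {1..p}.
  G_n^* is the set of such lists of length n (so it has p^n elements).\<close>

definition words :: "nat \<Rightarrow> nat \<Rightarrow> nat list set" where
  "words p n = {ws. length ws = n \<and> set ws \<subseteq> {1..p}}"

definition orbit :: "(nat \<Rightarrow> 'a \<Rightarrow> 'a) \<Rightarrow> nat list \<Rightarrow> nat \<Rightarrow> 'a \<Rightarrow> 'a" where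
  "orbit g ws j x = fold (\<lambda>i y. g i y) (take j ws) x"

definition word_dist :: "(nat \<Rightarrow> 'a::metric_space \<Rightarrow> 'a) \<Rightarrow> nat list \<Rightarrow> 'a \<Rightarrow> 'a \<Rightarrow> real" where
  "word_dist g ws x y = Max ((\<lambda>j. dist (orbit g ws j x) (orbit g ws j y)) ` {0..length ws})"

definition word_spanning :: "(nat \<Rightarrow> 'a::metric_space \<Rightarrow> 'a) \<Rightarrow> 'a set \<Rightarrow> nat list \<Rightarrow> real \<Rightarrow> 'a set \<Rightarrow> bool" where
  "word_spanning g K ws \<epsilon> F \<longleftrightarrow> F \<subseteq> K \<and> (\<forall>x\<in>K. \<exists>y\<in>F. word_dist g ws x y < \<epsilon>)"

definition bspan :: "(nat \<Rightarrow> 'a::metric_space \<Rightarrow> 'a) \<Rightarrow> 'a set \<Rightarrow> nat list \<Rightarrow> real \<Rightarrow> nat" where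
  "bspan g K ws \<epsilon> = (LEAST k. \<exists>F. finite F \<and> card F = k \<and> word_spanning g K ws \<epsilon> F)"

definition Bsemi :: "nat \<Rightarrow> (nat \<Rightarrow> 'a::metric_space \<Rightarrow> 'a) \<Rightarrow> 'a set \<Rightarrow> real \<Rightarrow> ereal" where
  "Bsemi p g K \<epsilon> = limsup (\<lambda>n. ereal (ln ((\<Sum>ws\<in>words p n. real (bspan g K ws \<epsilon>)) / real p ^ n) / real n))"

definition compact_nhd_in :: "'a::topological_space set \<Rightarrow> 'a \<Rightarrow> 'a set \<Rightarrow> bool" where
  "compact_nhd_in X x K \<longleftrightarrow> K \<subseteq> X \<and> compact K \<and>
     (\<exists>U. openin (top_of_set X) U \<and> x \<in> U \<and> U \<subseteq> K)"

definition hsemi_eps :: "nat \<Rightarrow> (nat \<Rightarrow> 'a::metric_space \<Rightarrow> 'a) \<Rightarrow> 'a set \<Rightarrow> 'a \<Rightarrow> real \<Rightarrow> ereal" where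
  "hsemi_eps p g X x \<epsilon> = (INF K\<in>{K. compact_nhd_in X x K}. Bsemi p g K \<epsilon>)"

definition hsemi :: "nat \<Rightarrow> (nat \<Rightarrow> 'a::metric_space \<Rightarrow> 'a) \<Rightarrow> 'a set \<Rightarrow> 'a \<Rightarrow> ereal" where
  "hsemi p g X x = Lim (at_right 0) (hsemi_eps p g X x)"

text \<open>Sigma_p^+ = {1..p}^N; a sequence (omega_1, omega_2, ...) is represented by
  omega :: nat => nat with omega 0 = omega_1, omega 1 = omega_2, etc.\<close>
definition shift_space :: "nat \<Rightarrow> (nat \<Rightarrow> nat) set" where
  "shift_space p = {\<omega>. \<forall>n. \<omega> n \<in> {1..p}}"

text \<open>D(omega, omega') = p^{-min{n >= 1 : omega_n ~= omega'_n}} (and 0 if omega = omega')\<close>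
definition Dshift :: "nat \<Rightarrow> (nat \<Rightarrow> nat) \<Rightarrow> (nat \<Rightarrow> nat) \<Rightarrow> real" where
  "Dshift p \<omega> \<omega>' = (if \<omega> = \<omega>' then 0
      else inverse (real p) ^ (Suc (LEAST n. \<omega> n \<noteq> \<omega>' n)))"

definition skew_dist :: "nat \<Rightarrow> (nat \<Rightarrow> nat) \<times> 'a::metric_space \<Rightarrow> (nat \<Rightarrow> nat) \<times> 'a \<Rightarrow> real" where
  "skew_dist p z z' = max (Dshift p (fst z) (fst z')) (dist (snd z) (snd z'))"

definition skew :: "(nat \<Rightarrow> 'a \<Rightarrow> 'a) \<Rightarrow> (nat \<Rightarrow> nat) \<times> 'a \<Rightarrow> (nat \<Rightarrow> nat) \<times> 'a" where
  "skew g z = ((\<lambda>n. fst z (Suc n)), g (fst z 0) (snd z))"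

definition bowen_dist :: "nat \<Rightarrow> (nat \<Rightarrow> 'a::metric_space \<Rightarrow> 'a) \<Rightarrow> nat \<Rightarrow> (nat \<Rightarrow> nat) \<times> 'a \<Rightarrow> (nat \<Rightarrow> nat) \<times> 'a \<Rightarrow> real" where
  "bowen_dist p g n z z' = Max ({0} \<union> (\<lambda>j. skew_dist p ((skew g ^^ j) z) ((skew g ^^ j) z')) ` {0..<n})"

definition bowen_spanning :: "nat \<Rightarrow> (nat \<Rightarrow> 'a::metric_space \<Rightarrow> 'a) \<Rightarrow> ((nat \<Rightarrow> nat) \<times> 'a) set \<Rightarrow> nat \<Rightarrow> real \<Rightarrow> ((nat \<Rightarrow> nat) \<times> 'a) set \<Rightarrow> bool" where
  "bowen_spanning p g V n \<epsilon> E \<longleftrightarrow> E \<subseteq> V \<and> (\<forall>z\<in>V. \<exists>z'\<in>E. bowen_dist p g n z z' < \<epsilon>)"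

definition bn_span :: "nat \<Rightarrow> (nat \<Rightarrow> 'a::metric_space \<Rightarrow> 'a) \<Rightarrow> ((nat \<Rightarrow> nat) \<times> 'a) set \<Rightarrow> nat \<Rightarrow> real \<Rightarrow> nat" where
  "bn_span p g V n \<epsilon> = (LEAST k. \<exists>E. finite E \<and> card E = k \<and> bowen_spanning p g V n \<epsilon> E)"

definition Bskew :: "nat \<Rightarrow> (nat \<Rightarrow> 'a::metric_space \<Rightarrow> 'a) \<Rightarrow> ((nat \<Rightarrow> nat) \<times> 'a) set \<Rightarrow> real \<Rightarrow> ereal" where
  "Bskew p g V \<epsilon> = limsup (\<lambda>n. ereal (ln (real (bn_span p g V n \<epsilon>)) / real n))"

definition skew_topology :: "nat \<Rightarrow> 'a::metric_space set \<Rightarrow> ((nat \<Rightarrow> nat) \<times> 'a) topology" where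
  "skew_topology p X = Metric_space.mtopology (shift_space p \<times> X) (skew_dist p)"

definition compact_nhd_skew :: "nat \<Rightarrow> 'a::metric_space set \<Rightarrow> (nat \<Rightarrow> nat) \<times> 'a \<Rightarrow> ((nat \<Rightarrow> nat) \<times> 'a) set \<Rightarrow> bool" where
  "compact_nhd_skew p X z V \<longleftrightarrow> compactin (skew_topology p X) V \<and>
     (\<exists>U. openin (skew_topology p X) U \<and> z \<in> U \<and> U \<subseteq> V)"

definition hskew_eps :: "nat \<Rightarrow> (nat \<Rightarrow> 'a::metric_space \<Rightarrow> 'a) \<Rightarrow> 'a set \<Rightarrow> (nat \<Rightarrow> nat) \<times> 'a \<Rightarrow> real \<Rightarrow> ereal" where
  "hskew_eps p g X z \<epsilon> = (INF V\<in>{V. compact_nhd_skew p X z V}. Bskew p g V \<epsilon>)"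

definition hskew :: "nat \<Rightarrow> (nat \<Rightarrow> 'a::metric_space \<Rightarrow> 'a) \<Rightarrow> 'a set \<Rightarrow> (nat \<Rightarrow> nat) \<times> 'a \<Rightarrow> ereal" where
  "hskew p g X z = Lim (at_right 0) (hskew_eps p g X z)"

end

(*
  Fix a compact neighbourhood K of x and choose m with 2^-(m+1) < eps. A point (omega, y) of
  Sigma_p^+ x K is (n, eps)-shadowed by (omega', y') as soon as omega' agrees with omega on the
  first n + m symbols and y' is eps-close to y along the word omega_1 ... omega_n: the symbols
  after position n + m move the shift coordinate by at most 2^-(m+1). Pairing an eps-spanning
  set for each word of length n with every choice of the next m symbols therefore gives
    b_n(Sigma_p^+ x K, eps) <= p^m * sum_{|w| = n} b_d(K, w, eps).
  After taking (1/n) log the factor p^m disappears, and the sum contributes B_d(K, eps) + log p.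
  Since Sigma_p^+ x K is a compact neighbourhood of (omega, x), the bound passes to the entropy
  functions at scale eps, and both sides are monotone in eps, so it survives the limit eps -> 0.
*)

theory Submission
  imports Defs
begin

section \<open>The metric of the skew product\<close>

lemma Dshift_nonneg: "p \<ge> 1 \<Longrightarrow> 0 \<le> Dshift p \<omega> \<omega>'"
  by (simp add: Dshift_def)

lemma Dshift_commute: "Dshift p \<omega> \<omega>' = Dshift p \<omega>' \<omega>"
  unfolding Dshift_def by (auto simp: eq_commute)

lemma Dshift_eq_0_iff: "p \<ge> 1 \<Longrightarrow> Dshift p \<omega> \<omega>' = 0 \<longleftrightarrow> \<omega> = \<omega>'"
  by (simp add: Dshift_def)

lemma Dshift_le_of_differ:
  assumes "p \<ge> 1" "\<omega> i \<noteq> \<omega>' i"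
  shows "inverse (real p) ^ Suc i \<le> Dshift p \<omega> \<omega>'"
proof -
  have "(LEAST n. \<omega> n \<noteq> \<omega>' n) \<le> i" using assms(2) by (rule Least_le)
  then have "inverse (real p) ^ Suc i \<le> inverse (real p) ^ Suc (LEAST n. \<omega> n \<noteq> \<omega>' n)"
    using assms(1) by (intro power_decreasing) (auto simp: inverse_le_1_iff)
  with assms(2) show ?thesis by (auto simp: Dshift_def)
qed

lemma Dshift_ultrametric:
  assumes "p \<ge> 1"
  shows "Dshift p \<omega> \<omega>'' \<le> max (Dshift p \<omega> \<omega>') (Dshift p \<omega>' \<omega>'')"
proof (cases "\<omega> = \<omega>''")
  case True
  then show ?thesis using Dshift_nonneg[OF assms] by (simp add: Dshift_def le_max_iff_disj)
next
  case False
  define m where "m = (LEAST n. \<omega> n \<noteq> \<omega>'' n)"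
  have "\<exists>n. \<omega> n \<noteq> \<omega>'' n" using False by (auto simp: fun_eq_iff)
  then have "\<omega> m \<noteq> \<omega>'' m" unfolding m_def by (rule LeastI_ex)
  moreover have "Dshift p \<omega> \<omega>'' = inverse (real p) ^ Suc m" using False by (simp add: Dshift_def m_def)
  ultimately show ?thesis
    using Dshift_le_of_differ[OF assms, of \<omega> m \<omega>'] Dshift_le_of_differ[OF assms, of \<omega>' m \<omega>'']
    by (metis le_max_iff_disj)
qed

lemma Dshift_less_imp_agree:
  assumes "p \<ge> 1" "Dshift p \<omega> \<omega>' < inverse (real p) ^ m" "i < m"
  shows "\<omega> i = \<omega>' i"
proof (rule ccontr)
  assume "\<omega> i \<noteq> \<omega>' i"
  then have "inverse (real p) ^ Suc i \<le> Dshift p \<omega> \<omega>'" by (rule Dshift_le_of_differ[OF assms(1)])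
  moreover have "inverse (real p) ^ m \<le> inverse (real p) ^ Suc i"
    using assms(1,3) by (intro power_decreasing) (auto simp: inverse_le_1_iff)
  ultimately show False using assms(2) by linarith
qed

text \<open>The bound is uniform in p because two distinct sequences exist only when p \<ge> 2.\<close>
lemma Dshift_le_of_agree:
  assumes "\<omega> \<in> shift_space p" "\<omega>' \<in> shift_space p" "\<And>i. i < m \<Longrightarrow> \<omega> i = \<omega>' i"
  shows "Dshift p \<omega> \<omega>' \<le> (1/2) ^ Suc m"
proof (cases "\<omega> = \<omega>'")
  case False
  define L where "L = (LEAST n. \<omega> n \<noteq> \<omega>' n)"
  have "\<exists>n. \<omega> n \<noteq> \<omega>' n" using False by (auto simp: fun_eq_iff)
  then have "\<omega> L \<noteq> \<omega>' L" unfolding L_def by (rule LeastI_ex)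
  then have "m \<le> L" using assms(3) not_le by blast
  have "p \<ge> 2"
  proof -
    have "\<omega> L \<in> {1..p}" "\<omega>' L \<in> {1..p}" using assms(1,2) by (auto simp: shift_space_def)
    then show ?thesis using \<open>\<omega> L \<noteq> \<omega>' L\<close> by auto
  qed
  then have "inverse (real p) ^ Suc L \<le> (1/2) ^ Suc L"
    by (intro power_mono) (auto simp: field_simps)
  also have "\<dots> \<le> (1/2) ^ Suc m" using \<open>m \<le> L\<close> by (intro power_decreasing) auto
  finally show ?thesis using False by (simp add: Dshift_def L_def)
qed (simp add: Dshift_def)

lemma skew_dist_metric:
  assumes "p \<ge> 1"
  shows "Metric_space (shift_space p \<times> X) (skew_dist p)"
proof
  fix z z' z'' :: "(nat \<Rightarrow> nat) \<times> 'a"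
  show "0 \<le> skew_dist p z z'"
    using Dshift_nonneg[OF assms] by (simp add: skew_dist_def le_max_iff_disj)
  show "skew_dist p z z' = skew_dist p z' z"
    by (simp add: skew_dist_def Dshift_commute dist_commute)
  show "skew_dist p z z' = 0 \<longleftrightarrow> z = z'"
    using Dshift_nonneg[OF assms, of "fst z" "fst z'"] Dshift_eq_0_iff[OF assms, of "fst z" "fst z'"]
      zero_le_dist[of "snd z" "snd z'"]
    by (auto simp: skew_dist_def prod_eq_iff max_def split: if_splits)
  show "skew_dist p z z'' \<le> skew_dist p z z' + skew_dist p z' z''"
    unfolding skew_dist_def
  proof (rule max.boundedI)
    have "Dshift p (fst z) (fst z'') \<le> Dshift p (fst z) (fst z') + Dshift p (fst z') (fst z'')"
      using Dshift_ultrametric[OF assms, of "fst z" "fst z''" "fst z'"]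
        Dshift_nonneg[OF assms, of "fst z" "fst z'"] Dshift_nonneg[OF assms, of "fst z'" "fst z''"]
      by (simp add: max_def split: if_split_asm)
    then show "Dshift p (fst z) (fst z'') \<le> max (Dshift p (fst z) (fst z')) (dist (snd z) (snd z'))
        + max (Dshift p (fst z') (fst z'')) (dist (snd z') (snd z''))"
      using add_mono[OF max.cobounded1 max.cobounded1] by (rule order_trans)
    show "dist (snd z) (snd z'') \<le> max (Dshift p (fst z) (fst z')) (dist (snd z) (snd z'))
        + max (Dshift p (fst z') (fst z'')) (dist (snd z') (snd z''))"
      using dist_triangle[of "snd z" "snd z''" "snd z'"] add_mono[OF max.cobounded2 max.cobounded2]
      by (rule order_trans)
  qed
qed

lemma half_power_Suc_less: "0 < (\<epsilon>::real) \<Longrightarrow> \<exists>m. (1/2::real) ^ Suc m < \<epsilon>"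
proof -
  assume "0 < \<epsilon>"
  then obtain n where "(1/2::real) ^ n < \<epsilon>" using real_arch_pow_inv[of \<epsilon> "1/2"] by auto
  moreover have "(1/2::real) ^ Suc n \<le> (1/2) ^ n" by (intro power_decreasing) auto
  ultimately show ?thesis by (intro exI[of _ n]) linarith
qed

lemma shift_space_subseq_coordinatewise:
  fixes \<omega> :: "nat \<Rightarrow> nat \<Rightarrow> nat"
  assumes "\<And>k. \<omega> k \<in> shift_space p"
  obtains l r where "l \<in> shift_space p" "strict_mono r"
    "\<And>i. eventually (\<lambda>n. \<omega> (r n) i = l i) sequentially"
proof -
  have "shift_space p = PiE UNIV (\<lambda>_. {1..p})"
    by (auto simp: shift_space_def PiE_def)
  then have "compact (shift_space p)"
    using compactin_PiE[of "\<lambda>_. euclidean" UNIV "\<lambda>_::nat. {1..p::nat}"]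
    by (simp add: euclidean_product_topology finite_imp_compact)
  then obtain l r where l: "l \<in> shift_space p" "strict_mono r" "(\<omega> \<circ> r) \<longlonglongrightarrow> l"
    using seq_compactE[OF compact_imp_seq_compact, of "shift_space p" \<omega>] assms by blast
  have "eventually (\<lambda>n. \<omega> (r n) i = l i) sequentially" for i
  proof -
    have "(\<lambda>n. \<omega> (r n) i) \<longlonglongrightarrow> l i"
      using continuous_on_tendsto_compose[OF continuous_on_product_coordinates l(3)] by auto
    then have "eventually (\<lambda>n. \<omega> (r n) i \<in> {l i}) sequentially"
      by (rule topological_tendstoD) (simp_all add: open_discrete)
    then show ?thesis by simp
  qed
  with l that show ?thesis by blast
qed

lemma compactin_skew_Times:
  assumes "p \<ge> 1" "compact K" "K \<subseteq> X"
  shows "compactin (skew_topology p X) (shift_space p \<times> K)"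
proof -
  interpret Metric_space "shift_space p \<times> X" "skew_dist p" by (rule skew_dist_metric[OF assms(1)])
  show ?thesis unfolding skew_topology_def compactin_sequentially
  proof (intro conjI allI impI)
    show "shift_space p \<times> K \<subseteq> shift_space p \<times> X" using assms(3) by auto
    fix \<sigma> :: "nat \<Rightarrow> (nat \<Rightarrow> nat) \<times> 'a"
    assume "range \<sigma> \<subseteq> shift_space p \<times> K"
    then have "\<sigma> k \<in> shift_space p \<times> K" for k by blast
    then have \<omega>: "\<And>k. fst (\<sigma> k) \<in> shift_space p" and y: "\<And>k. snd (\<sigma> k) \<in> K"
      by (auto simp: mem_Times_iff)
    obtain l r where l: "l \<in> shift_space p" "strict_mono r"
        "\<And>i. eventually (\<lambda>n. fst (\<sigma> (r n)) i = l i) sequentially"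
      using shift_space_subseq_coordinatewise[of "\<lambda>k. fst (\<sigma> k)"] \<omega> by blast
    obtain y0 r' where y0: "y0 \<in> K" "strict_mono r'" "((\<lambda>n. snd (\<sigma> (r n))) \<circ> r') \<longlonglongrightarrow> y0"
      using seq_compactE[OF compact_imp_seq_compact[OF assms(2)]] y by metis
    have "limitin mtopology (\<sigma> \<circ> (r \<circ> r')) (l, y0) sequentially"
      unfolding limitin_metric
    proof (intro conjI allI impI)
      show "(l, y0) \<in> shift_space p \<times> X" using l y0 assms(3) by auto
      fix \<epsilon> :: real assume "0 < \<epsilon>"
      then obtain m where m: "(1/2::real) ^ Suc m < \<epsilon>"
        using half_power_Suc_less by blast
      have "eventually (\<lambda>n. \<forall>i\<in>{..<m}. fst (\<sigma> (r n)) i = l i) sequentially"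
        using l(3) by (intro eventually_ball_finite) auto
      then have "eventually (\<lambda>n. \<forall>i\<in>{..<m}. fst (\<sigma> (r (r' n))) i = l i) sequentially"
        by (rule eventually_subseq[OF y0(2)])
      moreover have "eventually (\<lambda>n. dist (snd (\<sigma> (r (r' n)))) y0 < \<epsilon>) sequentially"
        using tendstoD[OF y0(3) \<open>0 < \<epsilon>\<close>] by (simp add: o_def)
      ultimately show "eventually (\<lambda>n. (\<sigma> \<circ> (r \<circ> r')) n \<in> shift_space p \<times> X \<and>
                skew_dist p ((\<sigma> \<circ> (r \<circ> r')) n) (l, y0) < \<epsilon>) sequentially"
      proof eventually_elim
        case (elim n)
        have "Dshift p (fst (\<sigma> (r (r' n)))) l \<le> (1/2) ^ Suc m"
          using elim by (intro Dshift_le_of_agree \<omega> l(1)) auto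
        then show ?case using elim m \<omega> y assms(3) by (auto simp: skew_dist_def mem_Times_iff)
      qed
    qed
    then show "\<exists>l r. l \<in> shift_space p \<times> K \<and> strict_mono r \<and> limitin mtopology (\<sigma> \<circ> r) l sequentially"
      using l(1,2) y0(1,2) strict_mono_o by blast
  qed
qed

lemma compact_nhd_skew_Times:
  assumes "p \<ge> 1" "compact_nhd_in X x K" "\<omega> \<in> shift_space p"
  shows "compact_nhd_skew p X (\<omega>, x) (shift_space p \<times> K)"
proof -
  interpret Metric_space "shift_space p \<times> X" "skew_dist p" by (rule skew_dist_metric[OF assms(1)])
  obtain U where U: "openin (top_of_set X) U" "x \<in> U" "U \<subseteq> K" and K: "K \<subseteq> X" "compact K"
    using assms(2) unfolding compact_nhd_in_def by blast
  have "openin mtopology (shift_space p \<times> U)"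
    unfolding openin_mtopology
  proof (intro conjI allI impI)
    show "shift_space p \<times> U \<subseteq> shift_space p \<times> X" using openin_imp_subset[OF U(1)] by auto
    fix z assume z: "z \<in> shift_space p \<times> U"
    then obtain e where "e > 0" "\<And>y. y \<in> X \<Longrightarrow> dist y (snd z) < e \<Longrightarrow> y \<in> U"
      using U(1) unfolding openin_euclidean_subtopology_iff by (auto simp: mem_Times_iff)
    then show "\<exists>r>0. mball z r \<subseteq> shift_space p \<times> U"
      by (intro exI[of _ e]) (auto simp: skew_dist_def dist_commute mem_Times_iff)
  qed
  then show ?thesis
    unfolding compact_nhd_skew_def using compactin_skew_Times[OF assms(1) K(2,1)] assms(3) U(2,3)
    by (metis skew_topology_def mem_Sigma_iff Sigma_mono order_refl)
qed

section \<open>Orbits along words and Bowen distances\<close>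

lemma continuous_on_fold:
  assumes "\<And>i. i \<in> set ws \<Longrightarrow> continuous_on X (g i)" "\<And>i. i \<in> set ws \<Longrightarrow> g i ` X \<subseteq> X"
  shows "continuous_on X (fold g ws) \<and> fold g ws ` X \<subseteq> X"
  using assms
proof (induction ws)
  case (Cons i ws)
  have i: "continuous_on X (g i)" "g i ` X \<subseteq> X" using Cons.prems by auto
  have IH: "continuous_on X (fold g ws)" "fold g ws ` X \<subseteq> X"
    using Cons.IH Cons.prems by auto
  have "continuous_on X (fold g ws \<circ> g i)"
    by (rule continuous_on_compose[OF i(1) continuous_on_subset[OF IH(1) i(2)]])
  moreover have "(fold g ws \<circ> g i) ` X \<subseteq> X"
    using i(2) IH(2) by (auto simp: image_subset_iff)
  ultimately show ?case by simp
qed simp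

lemma skew_funpow: "(skew g ^^ j) (\<omega>, y) = ((\<lambda>i. \<omega> (i + j)), fold g (map \<omega> [0..<j]) y)"
  by (induction j) (simp_all add: skew_def)

lemma dist_orbit_le_word_dist:
  "j \<le> length ws \<Longrightarrow> dist (orbit g ws j y) (orbit g ws j y') \<le> word_dist g ws y y'"
  unfolding word_dist_def by (rule Max_ge) auto

lemma bowen_dist_less_of_agree:
  assumes "\<omega> \<in> shift_space p" "\<omega>' \<in> shift_space p" "\<And>i. i < n + m \<Longrightarrow> \<omega> i = \<omega>' i"
    and "(1/2::real) ^ Suc m < \<epsilon>" "word_dist g (map \<omega> [0..<n]) y y' < \<epsilon>"
  shows "bowen_dist p g n (\<omega>, y) (\<omega>', y') < \<epsilon>"
proof -
  have "skew_dist p ((skew g ^^ j) (\<omega>, y)) ((skew g ^^ j) (\<omega>', y')) < \<epsilon>" if "j < n" for j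
  proof -
    have "Dshift p (\<lambda>i. \<omega> (i + j)) (\<lambda>i. \<omega>' (i + j)) \<le> (1/2) ^ Suc m"
      using assms(1-3) that by (intro Dshift_le_of_agree) (auto simp: shift_space_def)
    moreover have "orbit g (map \<omega> [0..<n]) j z = fold g (map \<omega> [0..<j]) z" for z
      using that by (simp add: orbit_def take_map)
    then have "dist (fold g (map \<omega> [0..<j]) y) (fold g (map \<omega> [0..<j]) y') < \<epsilon>"
      using dist_orbit_le_word_dist[of j "map \<omega> [0..<n]" g y y'] assms(5) that by simp
    moreover have "map \<omega>' [0..<j] = map \<omega> [0..<j]" using assms(3) that by simp
    then have "(skew g ^^ j) (\<omega>', y') = ((\<lambda>i. \<omega>' (i + j)), fold g (map \<omega> [0..<j]) y')"
      by (simp only: skew_funpow)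
    ultimately show ?thesis
      using assms(4) by (simp add: skew_funpow skew_dist_def)
  qed
  moreover have "0 < \<epsilon>"
    using assms(4) zero_less_power[of "1/2::real" "Suc m"] by linarith
  ultimately show ?thesis
    unfolding bowen_dist_def by (subst Max_less_iff) auto
qed

lemma Least_card_witness:
  assumes "finite F0" "P F0"
  shows "\<exists>F. finite F \<and> card F = (LEAST k. \<exists>F. finite F \<and> card F = k \<and> P F) \<and> P F"
  using assms by (intro LeastI_ex[of "\<lambda>k. \<exists>F. finite F \<and> card F = k \<and> P F"]) blast

lemma Least_card_le:
  assumes "finite F" "P F"
  shows "(LEAST k. \<exists>F. finite F \<and> card F = k \<and> P F) \<le> card F"
  using assms by (intro Least_le) blast

lemma Least_card_mono:
  assumes "finite F0" "P F0" "\<And>F. P F \<Longrightarrow> Q F"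
  shows "(LEAST k. \<exists>F. finite F \<and> card F = k \<and> Q F) \<le> (LEAST k. \<exists>F. finite F \<and> card F = k \<and> P F)"
proof -
  obtain F where "finite F" "card F = (LEAST k. \<exists>F. finite F \<and> card F = k \<and> P F)" "P F"
    using Least_card_witness[of F0 P] assms(1,2) by blast
  then show ?thesis using Least_card_le[of F Q] assms(3) by simp
qed

lemma (in Metric_space) compactin_obtain_finite_net:
  assumes "compactin mtopology V" "\<And>z. z \<in> V \<Longrightarrow> \<exists>\<delta>>0. \<forall>z'\<in>V. d z z' < \<delta> \<longrightarrow> R z z'"
  obtains E where "finite E" "E \<subseteq> V" "\<forall>z'\<in>V. \<exists>z\<in>E. R z z'"
proof -
  obtain \<delta> where \<delta>: "\<forall>z\<in>V. \<delta> z > 0 \<and> (\<forall>z'\<in>V. d z z' < \<delta> z \<longrightarrow> R z z')"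
    using bchoice[of V "\<lambda>z \<delta>. \<delta> > 0 \<and> (\<forall>z'\<in>V. d z z' < \<delta> \<longrightarrow> R z z')"] assms(2) by blast
  have "V \<subseteq> M" using compactin_subset_topspace[OF assms(1)] by simp
  with \<delta> have "V \<subseteq> \<Union>((\<lambda>z. mball z (\<delta> z)) ` V)" by auto
  moreover have "\<forall>B\<in>(\<lambda>z. mball z (\<delta> z)) ` V. openin mtopology B" by auto
  ultimately obtain F where F: "finite F" "F \<subseteq> (\<lambda>z. mball z (\<delta> z)) ` V" "V \<subseteq> \<Union>F"
    using assms(1) unfolding compactin_def by meson
  then obtain E where E: "E \<subseteq> V" "finite E" "F = (\<lambda>z. mball z (\<delta> z)) ` E"
    by (meson finite_subset_image)
  have "\<exists>z\<in>E. R z z'" if z': "z' \<in> V" for z'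
  proof -
    obtain z where "z \<in> E" "z' \<in> mball z (\<delta> z)" using z' F(3) unfolding E(3) by blast
    then show ?thesis using \<delta> E(1) z' by auto
  qed
  with E that show ?thesis by blast
qed

lemma word_spanning_mono: "word_spanning g K ws \<epsilon> F \<Longrightarrow> \<epsilon> \<le> \<epsilon>' \<Longrightarrow> word_spanning g K ws \<epsilon>' F"
  unfolding word_spanning_def by force

lemma bowen_spanning_mono: "bowen_spanning p g V n \<epsilon> E \<Longrightarrow> \<epsilon> \<le> \<epsilon>' \<Longrightarrow> bowen_spanning p g V n \<epsilon>' E"
  unfolding bowen_spanning_def by force

lemma finite_words: "finite (words p n)"
  unfolding words_def using finite_lists_length_eq[of "{1..p}" n] by (simp add: conj_commute)

lemma card_words: "card (words p n) = p ^ n"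
  unfolding words_def using card_lists_length_eq[of "{1..p}" n] by (simp add: conj_commute)

lemma map_in_words: "\<omega> \<in> shift_space p \<Longrightarrow> map \<omega> [a..<b] \<in> words p (b - a)"
  unfolding words_def shift_space_def by auto

definition pad_word :: "nat list \<Rightarrow> nat \<Rightarrow> nat" where
  "pad_word u i = (if i < length u then u ! i else 1)"

lemma pad_word_in_shift_space: "p \<ge> 1 \<Longrightarrow> set u \<subseteq> {1..p} \<Longrightarrow> pad_word u \<in> shift_space p"
  unfolding pad_word_def shift_space_def using nth_mem by fastforce

lemma bowen_spanning_of_word_spanning:
  assumes "p \<ge> 1" "(1/2::real) ^ Suc m < \<epsilon>" "\<And>w. w \<in> words p n \<Longrightarrow> word_spanning g K w \<epsilon> (F w)"
  shows "bowen_spanning p g (shift_space p \<times> K) n \<epsilon>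
    (\<Union>w\<in>words p n. \<Union>v\<in>words p m. (\<lambda>y. (pad_word (w @ v), y)) ` F w)"
    (is "bowen_spanning _ _ _ _ _ ?E")
  unfolding bowen_spanning_def
proof (intro conjI ballI)
  show "?E \<subseteq> shift_space p \<times> K"
    using assms(3) pad_word_in_shift_space[OF assms(1)] by (fastforce simp: words_def word_spanning_def)
  fix z assume "z \<in> shift_space p \<times> K"
  then obtain \<omega> y where z: "z = (\<omega>, y)" "\<omega> \<in> shift_space p" "y \<in> K" by auto
  define w where "w = map \<omega> [0..<n]"
  define v where "v = map \<omega> [n..<n + m]"
  have w: "w \<in> words p n" and v: "v \<in> words p m"
    unfolding w_def v_def using map_in_words[OF z(2)] by (metis diff_zero, metis add_diff_cancel_left')
  obtain y' where y': "y' \<in> F w" "word_dist g w y y' < \<epsilon>"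
    using assms(3)[OF w] z(3) unfolding word_spanning_def by blast
  have "w @ v = map \<omega> [0..<n + m]" unfolding w_def v_def
    by (simp add: upt_add_eq_append[of 0 n m, simplified])
  then have "\<omega> i = pad_word (w @ v) i" if "i < n + m" for i
    using that by (simp add: pad_word_def)
  moreover have "pad_word (w @ v) \<in> shift_space p"
    using w v pad_word_in_shift_space[OF assms(1)] by (auto simp: words_def)
  ultimately have "bowen_dist p g n (\<omega>, y) (pad_word (w @ v), y') < \<epsilon>"
    using bowen_dist_less_of_agree[OF z(2) _ _ assms(2)] y'(2) w_def by blast
  moreover have "(pad_word (w @ v), y') \<in> ?E" using w v y'(1) by blast
  ultimately show "\<exists>z'\<in>?E. bowen_dist p g n z z' < \<epsilon>" using z(1) by blast
qed

lemma card_padded_words_le: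
  assumes "\<And>w. w \<in> words p n \<Longrightarrow> finite (F w)"
  shows "card (\<Union>w\<in>words p n. \<Union>v\<in>words p m. (\<lambda>y. (pad_word (w @ v), y)) ` F w)
    \<le> p ^ m * (\<Sum>w\<in>words p n. card (F w))"
proof -
  have "card (\<Union>w\<in>words p n. \<Union>v\<in>words p m. (\<lambda>y. (pad_word (w @ v), y)) ` F w)
      \<le> (\<Sum>w\<in>words p n. card (\<Union>v\<in>words p m. (\<lambda>y. (pad_word (w @ v), y)) ` F w))"
    by (rule card_UN_le[OF finite_words])
  also have "\<dots> \<le> (\<Sum>w\<in>words p n. \<Sum>v\<in>words p m. card ((\<lambda>y. (pad_word (w @ v), y)) ` F w))"
    by (intro sum_mono card_UN_le finite_words)
  also have "\<dots> \<le> (\<Sum>w\<in>words p n. \<Sum>v\<in>words p m. card (F w))"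
    by (intro sum_mono card_image_le assms)
  also have "\<dots> = p ^ m * (\<Sum>w\<in>words p n. card (F w))"
    by (simp add: card_words sum_distrib_left)
  finally show ?thesis .
qed

section \<open>Growth rates\<close>

text \<open>This includes a = 0 because ln 0 = 0.\<close>
lemma ln_of_nat_mono: "a \<le> b \<Longrightarrow> ln (real a) \<le> ln (real b)"
  by (cases "a = 0"; cases "b = 0") (auto intro!: ln_ge_zero)

lemma limsup_ln_div_power_add_ln:
  fixes b :: "nat \<Rightarrow> real"
  assumes "\<And>n. 0 < b n" "0 < q"
  shows "limsup (\<lambda>n. ereal (ln (b n / q ^ n) / real n)) + ereal (ln q)
    = limsup (\<lambda>n. ereal (ln (b n) / real n))"
proof -
  have "eventually (\<lambda>n. ereal (ln (b n / q ^ n) / real n) + ereal (ln q)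
      = ereal (ln (b n) / real n)) sequentially"
    using eventually_gt_at_top[of 0]
  proof eventually_elim
    case (elim n)
    have "0 < b n" by (rule assms(1))
    with elim assms(2) show ?case by (simp add: ln_div ln_realpow field_simps)
  qed
  then show ?thesis
    by (subst Limsup_add_ereal_right[symmetric]) (auto intro: Limsup_eq)
qed

lemma limsup_ln_le_of_le_mult:
  fixes a b :: "nat \<Rightarrow> real"
  assumes "\<And>n. 0 \<le> a n" "\<And>n. a n \<le> C * b n" "\<And>n. 1 \<le> b n" "1 \<le> C"
  shows "limsup (\<lambda>n. ereal (ln (a n) / real n)) \<le> limsup (\<lambda>n. ereal (ln (b n) / real n))"
proof -
  have "ln (a n) \<le> ln C + ln (b n)" for n
  proof (cases "a n = 0")
    case False
    then have "0 < a n" using assms(1)[of n] by simp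
    with assms(2)[of n] have "ln (a n) \<le> ln (C * b n)" by (rule ln_mono)
    then show ?thesis using assms(3)[of n] assms(4) by (simp add: ln_mult)
  qed (use assms in simp)
  then have "ereal (ln (a n) / real n) \<le> ereal (ln C / real n) + ereal (ln (b n) / real n)" for n
    by (simp add: divide_right_mono add_divide_distrib[symmetric])
  then have "limsup (\<lambda>n. ereal (ln (a n) / real n))
      \<le> limsup (\<lambda>n. ereal (ln C / real n) + ereal (ln (b n) / real n))"
    by (intro Limsup_mono always_eventually) auto
  also have "\<dots> \<le> limsup (\<lambda>n. ereal (ln C / real n)) + limsup (\<lambda>n. ereal (ln (b n) / real n))"
    by (rule ereal_limsup_add_mono)
  also have "limsup (\<lambda>n. ereal (ln C / real n)) = 0"
    by (rule lim_imp_Limsup) (auto intro!: tendsto_eq_intros lim_const_over_n simp: zero_ereal_def)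
  finally show ?thesis by simp
qed

lemma Lim_at_right_0_antimono:
  fixes f :: "real \<Rightarrow> ereal"
  assumes "\<And>a b. 0 < a \<Longrightarrow> a \<le> b \<Longrightarrow> f b \<le> f a"
  shows "Lim (at_right 0) f = (SUP e\<in>{0<..}. f e)"
proof -
  have "(f \<longlongrightarrow> (SUP e\<in>{0<..}. f e)) (at_right 0)"
  proof (rule order_tendstoI)
    fix a assume "a < (SUP e\<in>{0<..}. f e)"
    then obtain e where e: "0 < e" "a < f e" by (auto simp: less_SUP_iff)
    have "a < f x" if "0 < x" "x < e" for x
      using assms[of x e] that e(2) by simp
    with e(1) show "eventually (\<lambda>x. a < f x) (at_right 0)"
      unfolding eventually_at_right_field by blast
  next
    fix a assume a: "(SUP e\<in>{0<..}. f e) < a"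
    have "f x < a" if "0 < x" for x
      using SUP_upper[of x "{0<..}" f] that a by simp
    then show "eventually (\<lambda>x. f x < a) (at_right 0)"
      unfolding eventually_at_right_field by (intro exI[of _ 1]) auto
  qed
  then show ?thesis by (rule tendsto_Lim[rotated]) simp
qed

locale semigroup_generators =
  fixes X :: "'a::metric_space set" and p :: nat and g :: "nat \<Rightarrow> 'a \<Rightarrow> 'a"
  assumes p_pos: "p \<ge> 1"
    and continuous: "\<And>i. i \<in> {1..p} \<Longrightarrow> continuous_on X (g i)"
    and maps_into: "\<And>i. i \<in> {1..p} \<Longrightarrow> g i ` X \<subseteq> X"
begin

lemma word_dist_small_near:
  assumes "set ws \<subseteq> {1..p}" "y \<in> X" "\<epsilon> > 0"
  shows "\<exists>\<delta>>0. \<forall>y'\<in>X. dist y y' < \<delta> \<longrightarrow> word_dist g ws y' y < \<epsilon>"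
proof -
  have "eventually (\<lambda>y'. dist (orbit g ws j y') (orbit g ws j y) < \<epsilon>) (at y within X)" for j
  proof -
    have "set (take j ws) \<subseteq> {1..p}" using assms(1) set_take_subset by fastforce
    then have "continuous_on X (fold g (take j ws))"
      using continuous_on_fold[of "take j ws" X g] continuous maps_into by blast
    then have "((\<lambda>y'. orbit g ws j y') \<longlongrightarrow> orbit g ws j y) (at y within X)"
      using assms(2) unfolding continuous_on_def orbit_def by blast
    then show ?thesis using assms(3) by (rule tendstoD)
  qed
  then have "eventually (\<lambda>y'. \<forall>j\<in>{0..length ws}. dist (orbit g ws j y') (orbit g ws j y) < \<epsilon>)
      (at y within X)"
    by (intro eventually_ball_finite) auto
  then obtain \<delta> where \<delta>: "\<delta> > 0" "\<And>y'. y' \<in> X \<Longrightarrow> y' \<noteq> y \<Longrightarrow> dist y' y < \<delta> \<Longrightarrow>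
      \<forall>j\<in>{0..length ws}. dist (orbit g ws j y') (orbit g ws j y) < \<epsilon>"
    unfolding eventually_at by blast
  have "word_dist g ws y' y < \<epsilon>" if "y' \<in> X" "dist y y' < \<delta>" for y'
  proof (cases "y' = y")
    case True
    then show ?thesis using assms(3) by (simp add: word_dist_def)
  next
    case False
    then show ?thesis
      using \<delta>(2)[OF that(1) False] that(2) unfolding word_dist_def
      by (subst Max_less_iff) (auto simp: dist_commute)
  qed
  with \<delta>(1) show ?thesis by blast
qed

lemma word_spanning_exists:
  assumes "set ws \<subseteq> {1..p}" "compact K" "K \<subseteq> X" "\<epsilon> > 0"
  shows "\<exists>F. finite F \<and> word_spanning g K ws \<epsilon> F"
proof -
  have "\<exists>\<delta>>0. \<forall>y'\<in>K. dist y y' < \<delta> \<longrightarrow> word_dist g ws y' y < \<epsilon>" if "y \<in> K" for y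
    using word_dist_small_near[OF assms(1) _ assms(4), of y] that assms(3) by blast
  moreover have "compactin Met_TC.mtopology K" using assms(2) by simp
  ultimately obtain F where "finite F" "F \<subseteq> K" "\<forall>y'\<in>K. \<exists>y\<in>F. word_dist g ws y' y < \<epsilon>"
    using Met_TC.compactin_obtain_finite_net[of K "\<lambda>y y'. word_dist g ws y' y < \<epsilon>"] by blast
  then show ?thesis unfolding word_spanning_def by blast
qed

lemma bowen_dist_small_near:
  assumes "z \<in> shift_space p \<times> X" "\<epsilon> > 0"
  shows "\<exists>\<delta>>0. \<forall>z'\<in>shift_space p \<times> X. skew_dist p z z' < \<delta> \<longrightarrow> bowen_dist p g n z' z < \<epsilon>"
proof -
  obtain \<omega> y where z: "z = (\<omega>, y)" "\<omega> \<in> shift_space p" "y \<in> X" using assms(1) by auto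
  obtain m where m: "(1/2::real) ^ Suc m < \<epsilon>" using half_power_Suc_less[OF assms(2)] by blast
  have "set (map \<omega> [0..<n]) \<subseteq> {1..p}" using z(2) by (auto simp: shift_space_def)
  then obtain \<delta> where \<delta>: "\<delta> > 0" "\<forall>y'\<in>X. dist y y' < \<delta> \<longrightarrow> word_dist g (map \<omega> [0..<n]) y' y < \<epsilon>"
    using word_dist_small_near z(3) assms(2) by blast
  have "bowen_dist p g n z' z < \<epsilon>"
    if z': "z' \<in> shift_space p \<times> X" "skew_dist p z z' < min \<delta> (inverse (real p) ^ (n + m))" for z'
  proof -
    obtain \<omega>' y' where z'_eq: "z' = (\<omega>', y')" "\<omega>' \<in> shift_space p" "y' \<in> X" using z'(1) by auto
    have D: "Dshift p \<omega> \<omega>' < inverse (real p) ^ (n + m)" and d: "dist y y' < \<delta>"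
      using z'(2) by (auto simp: z z'_eq skew_dist_def)
    have agree: "\<omega>' i = \<omega> i" if "i < n + m" for i
      using Dshift_less_imp_agree[OF p_pos D that] by simp
    then have map_eq: "map \<omega>' [0..<n] = map \<omega> [0..<n]" by simp
    have "word_dist g (map \<omega> [0..<n]) y' y < \<epsilon>" using \<delta>(2) z'_eq(3) d by blast
    then have "word_dist g (map \<omega>' [0..<n]) y' y < \<epsilon>" by (simp only: map_eq)
    from bowen_dist_less_of_agree[OF z'_eq(2) z(2) agree m this]
    show ?thesis unfolding z(1) z'_eq(1) .
  qed
  moreover have "min \<delta> (inverse (real p) ^ (n + m)) > 0" using \<delta>(1) p_pos by simp
  ultimately show ?thesis by blast
qed

lemma bowen_spanning_exists:
  assumes "compactin (skew_topology p X) V" "\<epsilon> > 0"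
  shows "\<exists>E. finite E \<and> bowen_spanning p g V n \<epsilon> E"
proof -
  interpret Metric_space "shift_space p \<times> X" "skew_dist p" by (rule skew_dist_metric[OF p_pos])
  have V: "compactin mtopology V" using assms(1) by (simp add: skew_topology_def)
  then have "V \<subseteq> shift_space p \<times> X" using compactin_subset_topspace by fastforce
  then have "\<exists>\<delta>>0. \<forall>z'\<in>V. skew_dist p z z' < \<delta> \<longrightarrow> bowen_dist p g n z' z < \<epsilon>" if "z \<in> V" for z
    using bowen_dist_small_near[OF _ assms(2), of z n] that by blast
  then obtain E where "finite E" "E \<subseteq> V" "\<forall>z'\<in>V. \<exists>z\<in>E. bowen_dist p g n z' z < \<epsilon>"
    using compactin_obtain_finite_net[OF V, of "\<lambda>z z'. bowen_dist p g n z' z < \<epsilon>"] by blast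
  then show ?thesis unfolding bowen_spanning_def by blast
qed

lemma bspan_witness:
  assumes "set ws \<subseteq> {1..p}" "compact K" "K \<subseteq> X" "\<epsilon> > 0"
  shows "\<exists>F. finite F \<and> card F = bspan g K ws \<epsilon> \<and> word_spanning g K ws \<epsilon> F"
proof -
  obtain F0 where "finite F0" "word_spanning g K ws \<epsilon> F0" using word_spanning_exists[OF assms] by blast
  then show ?thesis unfolding bspan_def by (rule Least_card_witness)
qed

lemma bspan_antimono:
  assumes "set ws \<subseteq> {1..p}" "compact K" "K \<subseteq> X" "0 < \<epsilon>" "\<epsilon> \<le> \<epsilon>'"
  shows "bspan g K ws \<epsilon>' \<le> bspan g K ws \<epsilon>"
proof -
  obtain F0 where "finite F0" "word_spanning g K ws \<epsilon> F0" using word_spanning_exists[OF assms(1-4)] by blast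
  then show ?thesis
    unfolding bspan_def by (rule Least_card_mono) (rule word_spanning_mono[OF _ assms(5)])
qed

lemma bn_span_antimono:
  assumes "compactin (skew_topology p X) V" "0 < \<epsilon>" "\<epsilon> \<le> \<epsilon>'"
  shows "bn_span p g V n \<epsilon>' \<le> bn_span p g V n \<epsilon>"
proof -
  obtain E0 where "finite E0" "bowen_spanning p g V n \<epsilon> E0" using bowen_spanning_exists[OF assms(1,2)] by blast
  then show ?thesis
    unfolding bn_span_def by (rule Least_card_mono) (rule bowen_spanning_mono[OF _ assms(3)])
qed

lemma power_le_sum_bspan:
  assumes "compact K" "K \<subseteq> X" "K \<noteq> {}" "\<epsilon> > 0"
  shows "real p ^ n \<le> (\<Sum>w\<in>words p n. real (bspan g K w \<epsilon>))"
proof -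
  have "1 \<le> bspan g K w \<epsilon>" if "w \<in> words p n" for w
  proof -
    have "set w \<subseteq> {1..p}" using that by (simp add: words_def)
    then obtain F where F: "finite F" "card F = bspan g K w \<epsilon>" "word_spanning g K w \<epsilon> F"
      using bspan_witness[OF _ assms(1,2,4)] by blast
    then have "F \<noteq> {}" using assms(3) by (auto simp: word_spanning_def)
    then have "0 < card F" using F(1) by (simp add: card_gt_0_iff)
    then show ?thesis using F(2) by simp
  qed
  then have "(\<Sum>w\<in>words p n. 1) \<le> (\<Sum>w\<in>words p n. real (bspan g K w \<epsilon>))"
    by (intro sum_mono) simp
  then show ?thesis by (simp add: card_words)
qed

lemma bn_span_le_sum_bspan:
  assumes "compact K" "K \<subseteq> X" "\<epsilon> > 0" "(1/2::real) ^ Suc m < \<epsilon>"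
  shows "bn_span p g (shift_space p \<times> K) n \<epsilon> \<le> p ^ m * (\<Sum>w\<in>words p n. bspan g K w \<epsilon>)"
proof -
  have "\<forall>w\<in>words p n. \<exists>F. finite F \<and> card F = bspan g K w \<epsilon> \<and> word_spanning g K w \<epsilon> F"
    using bspan_witness[OF _ assms(1-3)] by (simp add: words_def)
  then obtain F where F: "\<forall>w\<in>words p n.
      finite (F w) \<and> card (F w) = bspan g K w \<epsilon> \<and> word_spanning g K w \<epsilon> (F w)"
    by (rule bchoice[THEN exE])
  let ?E = "\<Union>w\<in>words p n. \<Union>v\<in>words p m. (\<lambda>y. (pad_word (w @ v), y)) ` F w"
  have "bowen_spanning p g (shift_space p \<times> K) n \<epsilon> ?E"
    using bowen_spanning_of_word_spanning[OF p_pos assms(4)] F by blast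
  moreover have "finite ?E" using F finite_words by blast
  ultimately have "bn_span p g (shift_space p \<times> K) n \<epsilon> \<le> card ?E"
    unfolding bn_span_def by (rule Least_card_le[rotated])
  also have "\<dots> \<le> p ^ m * (\<Sum>w\<in>words p n. card (F w))"
    using F by (intro card_padded_words_le) blast
  also have "\<dots> = p ^ m * (\<Sum>w\<in>words p n. bspan g K w \<epsilon>)"
    using F by (intro arg_cong[where f = "(*) _"] sum.cong) auto
  finally show ?thesis .
qed

lemma Bskew_le_Bsemi_add_ln:
  assumes "compact K" "K \<subseteq> X" "K \<noteq> {}" "\<epsilon> > 0"
  shows "Bskew p g (shift_space p \<times> K) \<epsilon> \<le> Bsemi p g K \<epsilon> + ereal (ln (real p))"
proof -
  obtain m where m: "(1/2::real) ^ Suc m < \<epsilon>" using half_power_Suc_less[OF assms(4)] by blast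
  define S where "S n = (\<Sum>w\<in>words p n. real (bspan g K w \<epsilon>))" for n
  have S_ge: "1 \<le> S n" for n
    using order_trans[OF one_le_power[of "real p" n] power_le_sum_bspan[OF assms, of n]] p_pos
    by (simp add: S_def)
  have "real (bn_span p g (shift_space p \<times> K) n \<epsilon>) \<le> real p ^ m * S n" for n
    using of_nat_mono[OF bn_span_le_sum_bspan[OF assms(1,2,4) m, of n]] by (simp add: S_def)
  then have "Bskew p g (shift_space p \<times> K) \<epsilon> \<le> limsup (\<lambda>n. ereal (ln (S n) / real n))"
    unfolding Bskew_def using p_pos S_ge by (intro limsup_ln_le_of_le_mult) auto
  also have "\<dots> = Bsemi p g K \<epsilon> + ereal (ln (real p))"
    unfolding Bsemi_def S_def[symmetric] using S_ge p_pos
    by (intro limsup_ln_div_power_add_ln[symmetric]) (auto intro: less_le_trans[OF zero_less_one])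
  finally show ?thesis .
qed

lemma Bsemi_antimono:
  assumes "compact K" "K \<subseteq> X" "K \<noteq> {}" "0 < \<epsilon>" "\<epsilon> \<le> \<epsilon>'"
  shows "Bsemi p g K \<epsilon>' \<le> Bsemi p g K \<epsilon>"
  unfolding Bsemi_def
proof (intro Limsup_mono always_eventually allI)
  fix n
  let ?q = "real p ^ n"
  have "(\<Sum>w\<in>words p n. real (bspan g K w \<epsilon>')) \<le> (\<Sum>w\<in>words p n. real (bspan g K w \<epsilon>))"
    using bspan_antimono[OF _ assms(1,2,4,5)] by (intro sum_mono) (simp add: words_def)
  then have "(\<Sum>w\<in>words p n. real (bspan g K w \<epsilon>')) / ?q \<le> (\<Sum>w\<in>words p n. real (bspan g K w \<epsilon>)) / ?q"
    by (rule divide_right_mono) simp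
  moreover have "0 < (\<Sum>w\<in>words p n. real (bspan g K w \<epsilon>')) / ?q"
  proof -
    have "0 < ?q" using p_pos by simp
    moreover have "?q \<le> (\<Sum>w\<in>words p n. real (bspan g K w \<epsilon>'))"
      using assms(4,5) by (intro power_le_sum_bspan[OF assms(1-3)]) simp
    ultimately show ?thesis by (meson divide_pos_pos less_le_trans)
  qed
  ultimately have "ln ((\<Sum>w\<in>words p n. real (bspan g K w \<epsilon>')) / ?q)
      \<le> ln ((\<Sum>w\<in>words p n. real (bspan g K w \<epsilon>)) / ?q)"
    by (rule ln_mono)
  then show "ereal (ln ((\<Sum>w\<in>words p n. real (bspan g K w \<epsilon>')) / ?q) / real n)
      \<le> ereal (ln ((\<Sum>w\<in>words p n. real (bspan g K w \<epsilon>)) / ?q) / real n)"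
    by (simp add: divide_right_mono)
qed

lemma Bskew_antimono:
  assumes "compactin (skew_topology p X) V" "0 < \<epsilon>" "\<epsilon> \<le> \<epsilon>'"
  shows "Bskew p g V \<epsilon>' \<le> Bskew p g V \<epsilon>"
  unfolding Bskew_def using ln_of_nat_mono[OF bn_span_antimono[OF assms]]
  by (intro Limsup_mono always_eventually allI) (simp add: divide_right_mono)

lemma hsemi_eq_SUP: "hsemi p g X x = (SUP \<epsilon>\<in>{0<..}. hsemi_eps p g X x \<epsilon>)"
  unfolding hsemi_def
proof (rule Lim_at_right_0_antimono)
  fix \<epsilon> \<epsilon>' :: real assume "0 < \<epsilon>" "\<epsilon> \<le> \<epsilon>'"
  then show "hsemi_eps p g X x \<epsilon>' \<le> hsemi_eps p g X x \<epsilon>"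
    unfolding hsemi_eps_def
    by (intro INF_mono) (auto simp: compact_nhd_in_def intro!: bexI Bsemi_antimono)
qed

lemma hskew_eq_SUP: "hskew p g X z = (SUP \<epsilon>\<in>{0<..}. hskew_eps p g X z \<epsilon>)"
  unfolding hskew_def
proof (rule Lim_at_right_0_antimono)
  fix \<epsilon> \<epsilon>' :: real assume "0 < \<epsilon>" "\<epsilon> \<le> \<epsilon>'"
  then show "hskew_eps p g X z \<epsilon>' \<le> hskew_eps p g X z \<epsilon>"
    unfolding hskew_eps_def
    by (intro INF_mono) (auto simp: compact_nhd_skew_def intro!: bexI Bskew_antimono)
qed

lemma hskew_eps_le_hsemi_eps_add_ln:
  assumes "\<omega> \<in> shift_space p" "\<epsilon> > 0"
  shows "hskew_eps p g X (\<omega>, x) \<epsilon> \<le> hsemi_eps p g X x \<epsilon> + ereal (ln (real p))"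
proof -
  have "hskew_eps p g X (\<omega>, x) \<epsilon> - ereal (ln (real p)) \<le> Bsemi p g K \<epsilon>"
    if K: "compact_nhd_in X x K" for K
  proof -
    have "hskew_eps p g X (\<omega>, x) \<epsilon> \<le> Bskew p g (shift_space p \<times> K) \<epsilon>"
      unfolding hskew_eps_def by (rule INF_lower) (simp add: compact_nhd_skew_Times[OF p_pos K assms(1)])
    also have "\<dots> \<le> Bsemi p g K \<epsilon> + ereal (ln (real p))"
      using K assms(2) by (intro Bskew_le_Bsemi_add_ln) (auto simp: compact_nhd_in_def)
    finally show ?thesis by (simp add: ereal_minus_le)
  qed
  then have "hskew_eps p g X (\<omega>, x) \<epsilon> - ereal (ln (real p)) \<le> hsemi_eps p g X x \<epsilon>"
    unfolding hsemi_eps_def by (intro INF_greatest) simp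
  then show ?thesis by (simp add: ereal_minus_le)
qed

end

theorem mainTheorem9:
  fixes X :: "'a::metric_space set" and g :: "nat \<Rightarrow> 'a \<Rightarrow> 'a" and p :: nat and x :: 'a
  assumes "compact X"
    and "p \<ge> 1"
    and "\<And>i. i \<in> {1..p} \<Longrightarrow> continuous_on X (g i)"
    and "\<And>i. i \<in> {1..p} \<Longrightarrow> g i ` X \<subseteq> X"
    and "x \<in> X"
  shows "(SUP \<omega>\<in>shift_space p. hskew p g X (\<omega>, x)) \<le> hsemi p g X x + ereal (ln (real p))"
proof -
  interpret semigroup_generators X p g using assms(2-4) by unfold_locales
  have "hskew_eps p g X (\<omega>, x) \<epsilon> \<le> hsemi p g X x + ereal (ln (real p))"
    if "\<omega> \<in> shift_space p" "\<epsilon> > 0" for \<omega> \<epsilon>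
  proof -
    have "hskew_eps p g X (\<omega>, x) \<epsilon> \<le> hsemi_eps p g X x \<epsilon> + ereal (ln (real p))"
      using hskew_eps_le_hsemi_eps_add_ln[OF that] .
    also have "\<dots> \<le> hsemi p g X x + ereal (ln (real p))"
      unfolding hsemi_eq_SUP using that(2) by (intro add_right_mono SUP_upper) simp
    finally show ?thesis .
  qed
  then show ?thesis
    unfolding hskew_eq_SUP by (intro SUP_least) auto
qed

end
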